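(* Let $n=p_1^{\alpha_1}\cdots p_r^{\alpha_r}$ be the canonical factorization of $n$ into distinct primes and let $d=p_1^{\beta_1}\cdots p_r^{\beta_r}$ be a square-free divisor of $n$ (i.e. $0\le\beta_\ell\le1$ for all $\ell$). Then $c_d(k)\neq0$ for every divisor $k$ of $n$, and for $s=0,1,2,\dots$, $$\sum_{k\mid n}\frac{1}{\big(c_d(k)\big)^s}=\prod_{\ell=1}^r\Big(\frac{\alpha_\ell}{(p_\ell-1)^{\beta_\ell s}}+(-1)^{\beta_\ell s}\Big).$$
   Context: For integers $m\ge1$ and $x$, $c_m(x)=\sum_{1\le j\le m,\ (j,m)=1}e^{2\pi ijx/m}$ is the Ramanujan sum; the sum is over positive divisors $k$ of $n$. *)

theory Defs
  imports "HOL-Computational_Algebra.Computational_Algebra"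
begin

definition ramanujan_sum :: "nat \<Rightarrow> int \<Rightarrow> complex" where
  "ramanujan_sum m x =
     (\<Sum>j\<in>{j\<in>{1..m}. coprime j m}.
        exp (2 * of_real pi * \<i> * of_nat j * of_int x / of_nat m))"

end

theory Submission
  imports Defs "HOL-Analysis.Complex_Transcendental" "HOL-Number_Theory.Cong" "HOL-Number_Theory.Totient"
begin

text \<open>
  The Ramanujan sum \<open>c\<^sub>m(x)\<close> is multiplicative in \<open>m\<close>: by the Chinese remainder theorem
  \<open>c\<^sub>m\<^sub>n(x) = c\<^sub>m(u x) c\<^sub>n(v x)\<close> for suitable units \<open>u\<close>, \<open>v\<close>, and multiplying the argument by
  a unit only permutes the totatives. At a prime, \<open>c\<^sub>p(k)\<close> is \<open>p - 1\<close> or \<open>-1\<close> according as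
  \<open>p\<close> divides \<open>k\<close> or not. So for squarefree \<open>d\<close>, \<open>c\<^sub>d(k)\<close> is a product of nonzero factors,
  the \<open>p\<close>-th depending only on whether \<open>p\<close> divides \<open>k\<close>. Hence the sum over the divisors of
  \<open>n\<close> factors over the primes of \<open>n\<close>, the \<open>p\<close>-th factor being a sum over the exponent
  \<open>e \<le> \<alpha>\<close> of \<open>p\<close> in \<open>k\<close>: the term \<open>(-1)\<^bsup>\<beta>s\<^esup>\<close> for \<open>e = 0\<close> and \<open>(p - 1)\<^bsup>-\<beta>s\<^esup>\<close> for each of
  the \<open>\<alpha>\<close> positive exponents.
\<close>

definition unity_root :: "nat \<Rightarrow> int \<Rightarrow> complex" where
  "unity_root m y = exp (2 * of_real pi * \<i> * of_int y / of_nat m)"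

lemma unity_root_power: "unity_root m y ^ j = unity_root m (int j * y)"
proof -
  have "unity_root m y ^ j = exp (of_nat j * (2 * of_real pi * \<i> * of_int y / of_nat m))"
    by (simp only: unity_root_def exp_of_nat_mult)
  also have "\<dots> = unity_root m (int j * y)"
    by (simp add: unity_root_def mult_ac)
  finally show ?thesis .
qed

lemma unity_root_eq_1_iff:
  assumes "m > 0"
  shows "unity_root m y = 1 \<longleftrightarrow> int m dvd y"
proof
  assume "unity_root m y = 1"
  then obtain t :: int where "2 * pi * y / m = of_int (2 * t) * pi"
    by (auto simp: unity_root_def exp_eq_1)
  then have "real_of_int y = real_of_int (t * int m)"
    using assms by (simp add: field_simps)
  then show "int m dvd y" by (simp only: of_int_eq_iff) simp
next
  assume "int m dvd y"
  then obtain t where "y = int m * t" by blast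
  then have "2 * of_real pi * \<i> * of_int y / of_nat m = \<i> * (of_int t * (of_real pi * 2))"
    using assms by (simp add: field_simps)
  then show "unity_root m y = 1"
    using exp_plus_2pin[of 0 t] by (simp add: unity_root_def)
qed

lemma unity_root_Suc_0 [simp]: "unity_root (Suc 0) y = 1"
  by (simp add: unity_root_eq_1_iff)

lemma unity_root_add: "unity_root m (a + b) = unity_root m a * unity_root m b"
  by (simp add: unity_root_def add_divide_distrib distrib_left exp_add)

lemma unity_root_cong:
  assumes "m > 0" "int m dvd a - b"
  shows "unity_root m a = unity_root m b"
  using assms unity_root_add[of m "a - b" b] by (simp add: unity_root_eq_1_iff)

lemma unity_root_mult:
  assumes "m > 0" "n > 0"
  shows "unity_root m a * unity_root n b = unity_root (m * n) (a * int n + b * int m)"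
proof -
  have "2 * of_real pi * \<i> * of_int a / of_nat m + 2 * of_real pi * \<i> * of_int b / of_nat n
      = 2 * of_real pi * \<i> * of_int (a * int n + b * int m) / (of_nat (m * n) :: complex)"
    using assms by (simp add: field_simps)
  then show ?thesis by (simp add: unity_root_def exp_add [symmetric])
qed

lemma unity_root_mod:
  assumes "m > 0"
  shows "unity_root m (int (j mod m) * y) = unity_root m (int j * y)"
proof (rule unity_root_cong [OF assms])
  have "int j - int (j mod m) = int m * int (j div m)"
    by (simp flip: of_nat_mult of_nat_diff add: minus_mod_eq_mult_div)
  then show "int m dvd int (j mod m) * y - int j * y"
    by (metis dvd_minus_iff dvd_mult2 dvd_triv_left left_diff_distrib minus_diff_eq)
qed

lemma unity_root_crt:
  assumes "m > 0" "n > 0" "[n * u + m * v = 1] (mod m * n)"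
  shows "unity_root (m * n) y = unity_root m (int u * y) * unity_root n (int v * y)"
proof -
  have "unity_root m (int u * y) * unity_root n (int v * y) =
        unity_root (m * n) (int u * y * int n + int v * y * int m)"
    using assms(1,2) by (rule unity_root_mult)
  also have "\<dots> = unity_root (m * n) y"
  proof (rule unity_root_cong)
    have "int (m * n) dvd int (n * u + m * v) - 1"
      using assms(3) by (metis cong_iff_dvd_diff cong_int_iff of_nat_1)
    moreover have "int u * y * int n + int v * y * int m - y = y * (int (n * u + m * v) - 1)"
      by (simp add: algebra_simps)
    ultimately show "int (m * n) dvd int u * y * int n + int v * y * int m - y"
      by simp
  qed (use assms in simp)
  finally show ?thesis ..
qed

lemma ramanujan_sum_totatives:
  "ramanujan_sum m x = (\<Sum>j\<in>totatives m. unity_root m (int j * x))"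
proof -
  have "{j\<in>{1..m}. coprime j m} = totatives m" by (auto simp: in_totatives_iff)
  then show ?thesis by (simp add: ramanujan_sum_def unity_root_def mult.assoc)
qed

lemma ramanujan_sum_Suc_0 [simp]: "ramanujan_sum (Suc 0) x = 1"
  by (simp add: ramanujan_sum_totatives)

lemma ramanujan_sum_prime:
  assumes "prime p"
  shows "ramanujan_sum p x = (if int p dvd x then of_nat p - 1 else -1)"
proof -
  have p0: "p > 0" using assms prime_gt_0_nat by blast
  have tot: "totatives p = {0<..<p}" using assms by (rule totatives_prime)
  have sum: "ramanujan_sum p x = (\<Sum>j\<in>{0<..<p}. unity_root p x ^ j)"
    by (simp add: ramanujan_sum_totatives tot unity_root_power)
  show ?thesis
  proof (cases "int p dvd x")
    case True
    then have "unity_root p x = 1" using p0 by (simp add: unity_root_eq_1_iff)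
    then show ?thesis using True p0 by (simp add: sum of_nat_diff)
  next
    case False
    define z where "z = unity_root p x"
    have "z ^ p = 1" using p0 by (simp add: z_def unity_root_power unity_root_eq_1_iff)
    moreover have "z \<noteq> 1" using False p0 by (simp add: z_def unity_root_eq_1_iff)
    ultimately have "(\<Sum>j<p. z ^ j) = 0" by (simp add: sum_gp_strict)
    moreover have "{..<p} = insert 0 {0<..<p}" using p0 by auto
    ultimately have "(\<Sum>j\<in>{0<..<p}. z ^ j) = -1"
      by (simp add: eq_neg_iff_add_eq_0 add.commute)
    then show ?thesis using False by (simp add: sum z_def)
  qed
qed

lemma bij_betw_totatives_mult:
  assumes "coprime u m" "m > 1"
  shows "bij_betw (\<lambda>j. u * j mod m) (totatives m) (totatives m)"
proof -
  obtain u' where u': "[u * u' = 1] (mod m)"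
    using cong_solve_coprime_nat[of u m] assms(1) by auto
  have closed: "a * j mod m \<in> totatives m" if "coprime a m" "j \<in> totatives m" for a j
  proof -
    have "coprime (a * j mod m) m"
      using that by (simp add: in_totatives_iff coprime_commute)
    then have "a * j mod m \<noteq> 0" using assms(2) by (intro notI) simp
    then show ?thesis using \<open>coprime (a * j mod m) m\<close> assms(2)
      by (simp add: in_totatives_iff less_imp_le)
  qed
  have cu': "coprime u' m"
    using u' by (metis coprime_1_left coprime_mult_left_iff cong_imp_coprime cong_sym)
  have inverse: "a * (b * j mod m) mod m = j"
    if "[a * b = 1] (mod m)" "j \<in> totatives m" for a b j
  proof -
    have "[a * (b * j mod m) = (a * b) * j] (mod m)"
      by (simp add: cong_def mod_mult_right_eq mult.assoc)
    also have "[(a * b) * j = 1 * j] (mod m)"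
      using that(1) by (intro cong_mult cong_refl)
    finally show ?thesis
      using totatives_less[OF that(2) assms(2)] by (simp add: cong_def)
  qed
  have "[u' * u = 1] (mod m)" using u' by (simp add: mult.commute)
  then show ?thesis
    using assms(1) cu' u'
    by (intro bij_betwI[where g = "\<lambda>j. u' * j mod m"] closed inverse funcsetI)
qed

lemma ramanujan_sum_mult_coprime_arg:
  assumes "coprime u m"
  shows "ramanujan_sum m (int u * x) = ramanujan_sum m x"
proof (cases "m > 1")
  case True
  then have "unity_root m (int j * (int u * x)) = unity_root m (int (u * j mod m) * x)" for j
    by (subst unity_root_mod) (simp_all add: mult_ac)
  then have "ramanujan_sum m (int u * x) = (\<Sum>j\<in>totatives m. unity_root m (int (u * j mod m) * x))"
    by (simp add: ramanujan_sum_totatives)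
  also have "\<dots> = ramanujan_sum m x"
    using sum.reindex_bij_betw [OF bij_betw_totatives_mult [OF assms True],
        of "\<lambda>j. unity_root m (int j * x)"]
    by (simp add: ramanujan_sum_totatives)
  finally show ?thesis .
next
  case False
  then have "m = 0 \<or> m = 1" by auto
  then show ?thesis by (auto simp: ramanujan_sum_totatives)
qed

lemma ramanujan_sum_mult:
  assumes "coprime m n"
  shows "ramanujan_sum (m * n) x = ramanujan_sum m x * ramanujan_sum n x"
proof (cases "m > 1 \<and> n > 1")
  case True
  then have mn: "m > 0" "n > 0" by auto
  obtain u where u: "[n * u = 1] (mod m)"
    using cong_solve_coprime_nat [of n m] assms by (auto simp: coprime_commute)
  obtain v where v: "[m * v = 1] (mod n)"
    using cong_solve_coprime_nat [of m n] assms by auto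
  have "coprime u m" "coprime v n"
    using u v by (metis coprime_1_left coprime_mult_left_iff cong_imp_coprime cong_sym)+
  have "[n * u + m * v = 1] (mod m * n)"
  proof (rule coprime_cong_mult_nat [OF _ _ assms])
    show "[n * u + m * v = 1] (mod m)"
      using cong_add [OF u cong_mult_self_left [of m v]] by simp
    show "[n * u + m * v = 1] (mod n)"
      using cong_add [OF cong_mult_self_left [of n u] v] by simp
  qed
  then have split: "unity_root (m * n) (int j * x) =
      unity_root m (int (j mod m) * (int u * x)) * unity_root n (int (j mod n) * (int v * x))" for j
    by (simp only: unity_root_mod mn) (simp add: unity_root_crt [OF mn] mult_ac)
  have "ramanujan_sum (m * n) x =
      (\<Sum>(a, b)\<in>totatives m \<times> totatives n.
         unity_root m (int a * (int u * x)) * unity_root n (int b * (int v * x)))"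
    using sum.reindex_bij_betw [OF bij_betw_totatives [OF _ _ assms],
        of "\<lambda>(a, b). unity_root m (int a * (int u * x)) * unity_root n (int b * (int v * x))"] True
    by (simp add: ramanujan_sum_totatives split)
  also have "\<dots> = ramanujan_sum m (int u * x) * ramanujan_sum n (int v * x)"
    by (simp add: ramanujan_sum_totatives sum_product sum.cartesian_product)
  finally show ?thesis
    using \<open>coprime u m\<close> \<open>coprime v n\<close> by (simp add: ramanujan_sum_mult_coprime_arg)
next
  case False
  with assms have "m = 1 \<or> n = 1" by (cases "m = 0 \<or> n = 0") auto
  then show ?thesis by (elim disjE) simp_all
qed

lemma ramanujan_sum_prod_primes:
  assumes "finite P" "\<And>p. p \<in> P \<Longrightarrow> prime p"
  shows "ramanujan_sum (\<Prod>P) x = (\<Prod>p\<in>P. ramanujan_sum p x)"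
  using assms
proof (induction P rule: finite_induct)
  case (insert p P)
  have "coprime p q" if "q \<in> P" for q
    using insert.hyps(2) insert.prems that by (intro primes_coprime) auto
  then have "coprime p (\<Prod>P)" by (rule prod_coprime_right)
  with insert show ?case by (simp add: ramanujan_sum_mult)
qed simp

lemma ramanujan_sum_squarefree:
  assumes "squarefree d"
  shows "ramanujan_sum d x = (\<Prod>p\<in>prime_factors d. ramanujan_sum p x)"
proof -
  have "d > 0" using assms by (cases d) auto
  then have "d = (\<Prod>p\<in>prime_factors d. p ^ multiplicity p d)" by (rule prime_factorization_nat)
  also have "\<dots> = \<Prod>(prime_factors d)"
    using assms \<open>d > 0\<close> by (intro prod.cong) (auto simp: squarefree_factorial_semiring')
  finally show ?thesis by (metis ramanujan_sum_prod_primes finite_set_mset in_prime_factors_imp_prime)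
qed

lemma sum_divisors_prod_multiplicity:
  fixes f :: "nat \<Rightarrow> nat \<Rightarrow> 'a :: comm_semiring_1"
  assumes "n > 0"
  shows "(\<Sum>k | k dvd n. \<Prod>p\<in>prime_factors n. f p (multiplicity p k)) =
         (\<Prod>p\<in>prime_factors n. \<Sum>e\<le>multiplicity p n. f p e)"
proof -
  define P where "P = prime_factors n"
  have factors_k: "(\<Prod>p\<in>P. p ^ multiplicity p k) = k" if "k dvd n" for k
  proof -
    have "k > 0" using that assms by (cases k) auto
    have "prime_factors k \<subseteq> P" using that assms by (simp add: P_def dvd_prime_factors)
    moreover have "multiplicity p k = 0" if "p \<in> P - prime_factors k" for p
      using that by (auto simp: P_def prime_factors_multiplicity)
    ultimately have "(\<Prod>p\<in>P. p ^ multiplicity p k) = (\<Prod>p\<in>prime_factors k. p ^ multiplicity p k)"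
      by (intro prod.mono_neutral_right) (auto simp: P_def)
    also have "\<dots> = k" using \<open>k > 0\<close> by (rule prime_factorization_nat [symmetric])
    finally show ?thesis .
  qed
  have multiplicity_prod: "multiplicity p (\<Prod>q\<in>P. q ^ g q) = g p" if "p \<in> P" for p g
    using that by (intro multiplicity_prod_prime_powers [of P p g, simplified that if_True])
      (auto simp: P_def in_prime_factors_imp_prime)
  have "bij_betw (\<lambda>k. restrict (\<lambda>p. multiplicity p k) P) {k. k dvd n}
          (PiE P (\<lambda>p. {..multiplicity p n}))"
  proof (rule bij_betwI [where g = "\<lambda>g. \<Prod>p\<in>P. p ^ g p"])
    show "(\<lambda>k. restrict (\<lambda>p. multiplicity p k) P) \<in> {k. k dvd n} \<rightarrow> PiE P (\<lambda>p. {..multiplicity p n})"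
      using assms by (auto intro: dvd_imp_multiplicity_le)
    show "(\<lambda>g. \<Prod>p\<in>P. p ^ g p) \<in> PiE P (\<lambda>p. {..multiplicity p n}) \<rightarrow> {k. k dvd n}"
    proof
      fix g assume "g \<in> PiE P (\<lambda>p. {..multiplicity p n})"
      then have "(\<Prod>p\<in>P. p ^ g p) dvd (\<Prod>p\<in>P. p ^ multiplicity p n)"
        by (intro prod_dvd_prod le_imp_power_dvd) auto
      then show "(\<Prod>p\<in>P. p ^ g p) \<in> {k. k dvd n}" using factors_k by simp
    qed
    show "(\<Prod>p\<in>P. p ^ restrict (\<lambda>p. multiplicity p k) P p) = k" if "k \<in> {k. k dvd n}" for k
      using that factors_k by simp
    show "restrict (\<lambda>p. multiplicity p (\<Prod>q\<in>P. q ^ g q)) P = g"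
      if "g \<in> PiE P (\<lambda>p. {..multiplicity p n})" for g
    proof -
      have "restrict (\<lambda>p. multiplicity p (\<Prod>q\<in>P. q ^ g q)) P = restrict g P"
        by (intro restrict_ext multiplicity_prod)
      then show ?thesis using that by simp
    qed
  qed
  then have "(\<Sum>g\<in>PiE P (\<lambda>p. {..multiplicity p n}). \<Prod>p\<in>P. f p (g p)) =
             (\<Sum>k | k dvd n. \<Prod>p\<in>P. f p (restrict (\<lambda>p. multiplicity p k) P p))"
    by (rule sum.reindex_bij_betw [symmetric])
  also have "\<dots> = (\<Sum>k | k dvd n. \<Prod>p\<in>P. f p (multiplicity p k))"
    by (intro sum.cong prod.cong) auto
  finally show ?thesis by (simp add: P_def prod_sum_PiE)
qed

lemma ramanujan_sum_squarefree_dvd: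
  assumes "squarefree d" "d dvd n" "n > 0"
  shows "ramanujan_sum d x = (\<Prod>p\<in>prime_factors n. ramanujan_sum p x ^ multiplicity p d)"
proof -
  have "d > 0" using assms(1) by (cases d) auto
  have sub: "prime_factors d \<subseteq> prime_factors n" using assms by (simp add: dvd_prime_factors)
  have "multiplicity p d = 0" if "p \<in> prime_factors n - prime_factors d" for p
    using that by (auto simp: prime_factors_multiplicity)
  then have "(\<Prod>p\<in>prime_factors n. ramanujan_sum p x ^ multiplicity p d) =
        (\<Prod>p\<in>prime_factors d. ramanujan_sum p x ^ multiplicity p d)"
    using sub by (intro prod.mono_neutral_right) auto
  also have "\<dots> = (\<Prod>p\<in>prime_factors d. ramanujan_sum p x)"
    using assms(1) \<open>d > 0\<close> by (intro prod.cong) (auto simp: squarefree_factorial_semiring')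
  finally show ?thesis using assms(1) by (simp add: ramanujan_sum_squarefree)
qed

lemma ramanujan_sum_prime_nonzero:
  assumes "prime p"
  shows "ramanujan_sum p x \<noteq> 0"
  using prime_gt_1_nat [OF assms] by (simp add: ramanujan_sum_prime [OF assms])

lemma ramanujan_sum_prime_multiplicity:
  assumes "prime p" "k > 0"
  shows "ramanujan_sum p (int k) = ramanujan_sum p (int (p ^ multiplicity p k))"
proof -
  have "p dvd k \<longleftrightarrow> multiplicity p k > 0"
    using assms by (simp add: prime_multiplicity_gt_zero_iff)
  also have "\<dots> \<longleftrightarrow> p dvd p ^ multiplicity p k"
    using assms(1) by (cases "multiplicity p k") (auto dest: prime_dvd_power)
  finally show ?thesis using assms(1) by (simp add: ramanujan_sum_prime flip: of_nat_power)
qed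

lemma sum_inverse_ramanujan_sum_prime_powers:
  assumes "prime p"
  shows "(\<Sum>e\<le>a. (1 / ramanujan_sum p (int (p ^ e))) ^ t) = of_nat a / (of_nat p - 1) ^ t + (-1) ^ t"
proof -
  have "\<not> p dvd 1" using assms by (metis not_prime_1 nat_dvd_1_iff_1)
  then have at_1: "ramanujan_sum p 1 = -1" using assms by (simp add: ramanujan_sum_prime)
  have at_power: "ramanujan_sum p (int p ^ e) = of_nat p - 1" if "e \<ge> 1" for e
    using assms that by (simp add: ramanujan_sum_prime dvd_power)
  have "{..a} = insert 0 {1..a}" by auto
  then have "(\<Sum>e\<le>a. (1 / ramanujan_sum p (int (p ^ e))) ^ t) =
      (1 / ramanujan_sum p 1) ^ t + (\<Sum>e\<in>{1..a}. (1 / ramanujan_sum p (int (p ^ e))) ^ t)"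
    by simp
  also have "\<dots> = (-1) ^ t + of_nat a * (1 / (of_nat p - 1)) ^ t"
    by (simp add: at_1 at_power)
  finally show ?thesis by (simp add: power_one_over add.commute)
qed

lemma inverse_power_ramanujan_sum_squarefree:
  assumes "squarefree d" "d dvd n" "k dvd n" "n > 0"
  shows "1 / ramanujan_sum d (int k) ^ s =
    (\<Prod>p\<in>prime_factors n. (1 / ramanujan_sum p (int (p ^ multiplicity p k))) ^ (multiplicity p d * s))"
proof -
  have "k > 0" using assms(3,4) by (cases k) auto
  then have "ramanujan_sum d (int k) =
      (\<Prod>p\<in>prime_factors n. ramanujan_sum p (int (p ^ multiplicity p k)) ^ multiplicity p d)"
    unfolding ramanujan_sum_squarefree_dvd [OF assms(1,2,4)]
    by (intro prod.cong refl) (metis in_prime_factors_imp_prime ramanujan_sum_prime_multiplicity)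
  then show ?thesis by (simp add: power_one_over prod_dividef prod_power_distrib power_mult)
qed

theorem mainTheorem9:
  fixes n d :: nat
  assumes "n > 0" and "squarefree d" and "d dvd n"
  shows "(\<forall>k. k dvd n \<longrightarrow> ramanujan_sum d (int k) \<noteq> 0) \<and>
         (\<forall>s::nat. (\<Sum>k\<in>{k. k dvd n}. 1 / (ramanujan_sum d (int k)) ^ s) =
            (\<Prod>p\<in>prime_factors n.
               of_nat (multiplicity p n) / (of_nat p - 1) ^ (multiplicity p d * s)
               + (-1) ^ (multiplicity p d * s)))"
proof (intro conjI allI impI)
  show "ramanujan_sum d (int k) \<noteq> 0" for k
    using ramanujan_sum_prime_nonzero
    by (auto simp: ramanujan_sum_squarefree_dvd [OF assms(2,3,1)] in_prime_factors_iff)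
  fix s :: nat
  have "(\<Sum>k\<in>{k. k dvd n}. 1 / ramanujan_sum d (int k) ^ s) =
      (\<Sum>k | k dvd n. \<Prod>p\<in>prime_factors n.
         (1 / ramanujan_sum p (int (p ^ multiplicity p k))) ^ (multiplicity p d * s))"
    using assms by (intro sum.cong) (auto simp: inverse_power_ramanujan_sum_squarefree)
  also have "\<dots> = (\<Prod>p\<in>prime_factors n. \<Sum>e\<le>multiplicity p n.
      (1 / ramanujan_sum p (int (p ^ e))) ^ (multiplicity p d * s))"
    using assms(1) by (rule sum_divisors_prod_multiplicity)
  also have "\<dots> = (\<Prod>p\<in>prime_factors n.
      of_nat (multiplicity p n) / (of_nat p - 1) ^ (multiplicity p d * s) + (-1) ^ (multiplicity p d * s))"
    by (intro prod.cong refl sum_inverse_ramanujan_sum_prime_powers) (simp add: in_prime_factors_imp_prime)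
  finally show "(\<Sum>k\<in>{k. k dvd n}. 1 / ramanujan_sum d (int k) ^ s) =
      (\<Prod>p\<in>prime_factors n.
         of_nat (multiplicity p n) / (of_nat p - 1) ^ (multiplicity p d * s) + (-1) ^ (multiplicity p d * s))" .
qed

end
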